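(* Let $E=\{x:\langle Ax,x\rangle=1\}$, $A=\operatorname{diag}(1/a_1^2,1/a_2^2)$, be an ellipse. For an $n$-periodic billiard trajectory $P=(p_1,\dots,p_n)$ in $E$ with unit side vectors $u_i=(p_{i+1}-p_i)/|p_{i+1}-p_i|$, set $J(P)=-\langle u_1,Ap_1\rangle$. Then $J(P)$ is constant as $P$ varies in a 1-parameter family of $n$-periodic billiard trajectories in $E$.
   Context: An $n$-periodic billiard trajectory in the ellipse $E$ is a closed polygon $P=(p_1,\dots,p_n)$ (indices mod $n$) with all $p_i\in E$ that obeys the law of reflection at every vertex. All sides of such a trajectory are tangent to a common conic confocal with $E$ (the caustic). A 1-parameter family of $n$-periodic billiard trajectories is a continuous family of such polygons all tangent to the same confocal caustic. *)

theory Defs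
  imports "HOL-Analysis.Analysis"
begin

definition Amat :: "real \<Rightarrow> real \<Rightarrow> real^2 \<Rightarrow> real^2" where
  "Amat a1 a2 x = (\<chi> i. if i = 1 then x$1 / a1\<^sup>2 else x$2 / a2\<^sup>2)"

definition ellipse :: "real \<Rightarrow> real \<Rightarrow> (real^2) set" where
  "ellipse a1 a2 = {x. Amat a1 a2 x \<bullet> x = 1}"

text \<open>Polygons are functions nat => real^2, vertex i meaning p (i mod n);
  vertices are indexed 0..n-1 (the paper's p_1 is our p 0).\<close>

definition vtx :: "nat \<Rightarrow> (nat \<Rightarrow> real^2) \<Rightarrow> nat \<Rightarrow> real^2" where
  "vtx n p i = p (i mod n)"

definition side_dir :: "nat \<Rightarrow> (nat \<Rightarrow> real^2) \<Rightarrow> nat \<Rightarrow> real^2" where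
  "side_dir n p i = (1 / norm (vtx n p (Suc i) - vtx n p i)) *\<^sub>R (vtx n p (Suc i) - vtx n p i)"

text \<open>Law of reflection at vertex p_i: the outgoing direction u_i is the mirror image
  of the incoming direction u_{i-1} in the tangent line of E at p_i, whose normal is A p_i.\<close>
definition reflection_law :: "real \<Rightarrow> real \<Rightarrow> nat \<Rightarrow> (nat \<Rightarrow> real^2) \<Rightarrow> nat \<Rightarrow> bool" where
  "reflection_law a1 a2 n p i \<longleftrightarrow>
     (let N = Amat a1 a2 (vtx n p i); v = side_dir n p (i + n - 1) in
      side_dir n p i = v - (2 * (v \<bullet> N) / (N \<bullet> N)) *\<^sub>R N)"

definition periodic_billiard :: "real \<Rightarrow> real \<Rightarrow> nat \<Rightarrow> (nat \<Rightarrow> real^2) \<Rightarrow> bool" where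
  "periodic_billiard a1 a2 n p \<longleftrightarrow>
     n \<ge> 1 \<and>
     (\<forall>i<n. p i \<in> ellipse a1 a2) \<and>
     (\<forall>i<n. vtx n p (Suc i) \<noteq> vtx n p i) \<and>
     (\<forall>i<n. reflection_law a1 a2 n p i)"

definition Bmat :: "real \<Rightarrow> real \<Rightarrow> real \<Rightarrow> real^2 \<Rightarrow> real^2" where
  "Bmat a1 a2 lam x = (\<chi> i. if i = 1 then x$1 / (a1\<^sup>2 - lam) else x$2 / (a2\<^sup>2 - lam))"

definition confocal_conic :: "real \<Rightarrow> real \<Rightarrow> real \<Rightarrow> (real^2) set" where
  "confocal_conic a1 a2 lam = {x. Bmat a1 a2 lam x \<bullet> x = 1}"

definition confocal_param :: "real \<Rightarrow> real \<Rightarrow> real \<Rightarrow> bool" where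
  "confocal_param a1 a2 lam \<longleftrightarrow> lam \<noteq> a1\<^sup>2 \<and> lam \<noteq> a2\<^sup>2"

definition tangent_line :: "real \<Rightarrow> real \<Rightarrow> real \<Rightarrow> real^2 \<Rightarrow> real^2 \<Rightarrow> bool" where
  "tangent_line a1 a2 lam p q \<longleftrightarrow>
     (\<exists>c \<in> confocal_conic a1 a2 lam. (\<exists>s::real. c = p + s *\<^sub>R (q - p)) \<and>
         (q - p) \<bullet> Bmat a1 a2 lam c = 0)"

definition sides_tangent_to :: "real \<Rightarrow> real \<Rightarrow> real \<Rightarrow> nat \<Rightarrow> (nat \<Rightarrow> real^2) \<Rightarrow> bool" where
  "sides_tangent_to a1 a2 lam n p \<longleftrightarrow>
     (\<forall>i<n. tangent_line a1 a2 lam (vtx n p i) (vtx n p (Suc i)))"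

definition billiard_family :: "real \<Rightarrow> real \<Rightarrow> nat \<Rightarrow> real set \<Rightarrow> (real \<Rightarrow> nat \<Rightarrow> real^2) \<Rightarrow> bool" where
  "billiard_family a1 a2 n I P \<longleftrightarrow>
     connected I \<and>
     (\<forall>i<n. continuous_on I (\<lambda>t. P t i)) \<and>
     (\<forall>t\<in>I. periodic_billiard a1 a2 n (P t)) \<and>
     (\<exists>lam. confocal_param a1 a2 lam \<and> (\<forall>t\<in>I. sides_tangent_to a1 a2 lam n (P t)))"

definition Jinv :: "real \<Rightarrow> real \<Rightarrow> nat \<Rightarrow> (nat \<Rightarrow> real^2) \<Rightarrow> real" where
  "Jinv a1 a2 n p = - (side_dir n p 0 \<bullet> Amat a1 a2 (vtx n p 0))"

end

theory Submission
  imports Defs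
begin

text \<open>Joachimsthal's integral: if the line through a point p of E in the unit direction u is
  tangent to the confocal conic with parameter lam, then <u, A p>^2 = lam / (a1^2 a2^2).
  Hence J(P)^2 is the same for every trajectory of the family; J depends continuously on
  the parameter and takes at most two values, so on a connected parameter set it is constant.\<close>

lemma inner_vec2: "(x::real^2) \<bullet> y = x$1 * y$1 + x$2 * y$2"
  by (simp add: inner_vec_def sum_2)

lemma Amat_nth [simp]: "Amat a b x $ 1 = x$1 / a\<^sup>2" "Amat a b x $ 2 = x$2 / b\<^sup>2"
  by (simp_all add: Amat_def)

lemma Bmat_nth [simp]: "Bmat a b l x $ 1 = x$1 / (a\<^sup>2 - l)" "Bmat a b l x $ 2 = x$2 / (b\<^sup>2 - l)"
  by (simp_all add: Bmat_def)

lemma double_root_discriminant: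
  fixes A B C s :: real
  assumes "B + s*A = 0" "C + 2 * s * B + s^2*A = 1"
  shows "B^2 = A*(C - 1)"
proof -
  have "B = - s*A" using assms(1) by linarith
  then show ?thesis using assms(2) by (simp add: algebra_simps power2_eq_square)
qed

text \<open>Restricted to the tangent line p + s (q - p), the quadratic equation of the conic has a
  double root at the point of contact, so its discriminant vanishes.\<close>

lemma tangent_line_discriminant:
  assumes "tangent_line a b l p q"
  defines "x \<equiv> p$1" and "y \<equiv> p$2" and "du \<equiv> (q - p)$1" and "dv \<equiv> (q - p)$2"
  shows "(x*du/(a^2-l) + y*dv/(b^2-l))^2
       = (du^2/(a^2-l) + dv^2/(b^2-l)) * (x^2/(a^2-l) + y^2/(b^2-l) - 1)"
proof -
  obtain c s where on_conic: "Bmat a b l c \<bullet> c = 1" and touch: "(q - p) \<bullet> Bmat a b l c = 0"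
    and c: "c = p + s *\<^sub>R (q - p)"
    using assms(1) unfolding tangent_line_def confocal_conic_def by blast
  have c_nth: "c$1 = x + s*du" "c$2 = y + s*dv"
    unfolding c x_def y_def du_def dv_def by simp_all
  have "du * (c$1/(a^2-l)) + dv * (c$2/(b^2-l)) = 0"
    using touch by (simp add: inner_vec2 du_def dv_def)
  then have "x*du/(a^2-l) + y*dv/(b^2-l) + s * (du^2/(a^2-l) + dv^2/(b^2-l)) = 0"
    by (simp add: c_nth add_divide_distrib algebra_simps power2_eq_square)
  moreover have "x^2/(a^2-l) + y^2/(b^2-l) + 2 * s * (x*du/(a^2-l) + y*dv/(b^2-l))
      + s^2 * (du^2/(a^2-l) + dv^2/(b^2-l)) = 1"
    using on_conic by (simp add: inner_vec2 c_nth add_divide_distrib algebra_simps power2_eq_square)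
  ultimately show ?thesis by (rule double_root_discriminant)
qed

lemma tangency_discriminant_cleared:
  fixes \<alpha> \<beta> x y du dv :: real
  assumes "\<alpha> \<noteq> 0" "\<beta> \<noteq> 0"
    and "(x*du/\<alpha> + y*dv/\<beta>)^2 = (du^2/\<alpha> + dv^2/\<beta>) * (x^2/\<alpha> + y^2/\<beta> - 1)"
  shows "(du*y - dv*x)^2 = du^2*\<beta> + dv^2*\<alpha>"
proof -
  have "(x*du*\<beta> + y*dv*\<alpha>)^2 = (du^2*\<beta> + dv^2*\<alpha>) * (x^2*\<beta> + y^2*\<alpha> - \<alpha>*\<beta>)"
    using assms by (simp add: field_simps power2_eq_square)
  moreover have "(x*du*\<beta> + y*dv*\<alpha>)^2 - (du^2*\<beta> + dv^2*\<alpha>) * (x^2*\<beta> + y^2*\<alpha> - \<alpha>*\<beta>)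
      = \<alpha>*\<beta>*(du^2*\<beta> + dv^2*\<alpha> - (du*y - dv*x)^2)"
    by (simp add: algebra_simps power2_eq_square)
  ultimately show ?thesis using assms(1,2) by simp
qed

lemma ellipse_polar_identity:
  fixes a b x y du dv :: real
  assumes "a \<noteq> 0" "b \<noteq> 0" "x^2/a^2 + y^2/b^2 = 1"
  shows "(x*du/a^2 + y*dv/b^2)^2 = (du^2*b^2 + dv^2*a^2 - (du*y - dv*x)^2) / (a^2*b^2)"
proof -
  have "x^2*b^2 + y^2*a^2 = a^2*b^2" using assms by (simp add: field_simps)
  then have "(x*du*b^2 + y*dv*a^2)^2 = (du^2*b^2 + dv^2*a^2 - (du*y - dv*x)^2) * (a^2*b^2)"
    by algebra
  moreover have "(x*du/a^2 + y*dv/b^2)^2 = (x*du*b^2 + y*dv*a^2)^2 / (a^2*b^2)^2"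
    using assms(1,2) by (simp add: field_simps)
  ultimately show ?thesis using assms(1,2) by (simp add: power2_eq_square)
qed

lemma tangent_line_inner_Amat_squared:
  assumes "a \<noteq> 0" "b \<noteq> 0" "confocal_param a b l" "p \<in> ellipse a b" "tangent_line a b l p q"
  shows "((q - p) \<bullet> Amat a b p)^2 = l * (norm (q - p))^2 / (a^2*b^2)"
proof -
  define x y du dv where "x = p$1" "y = p$2" "du = (q - p)$1" "dv = (q - p)$2"
  have nonzero: "a^2 - l \<noteq> 0" "b^2 - l \<noteq> 0"
    using assms(3) unfolding confocal_param_def by auto
  have tangency: "(du*y - dv*x)^2 = du^2*(b^2 - l) + dv^2*(a^2 - l)"
    using tangency_discriminant_cleared[OF nonzero tangent_line_discriminant[OF assms(5)]]
    unfolding x_y_du_dv_def .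
  have "x^2/a^2 + y^2/b^2 = 1"
    using assms(4) unfolding ellipse_def x_y_du_dv_def by (simp add: inner_vec2 power2_eq_square)
  then have "((q - p) \<bullet> Amat a b p)^2 = (du^2*b^2 + dv^2*a^2 - (du*y - dv*x)^2) / (a^2*b^2)"
    using ellipse_polar_identity[OF assms(1,2)]
    by (simp add: inner_vec2 x_y_du_dv_def mult.commute)
  also have "\<dots> = l * (norm (q - p))^2 / (a^2*b^2)"
    unfolding tangency power2_norm_eq_inner
    by (simp add: inner_vec2 x_y_du_dv_def algebra_simps power2_eq_square)
  finally show ?thesis .
qed

lemma tangent_unit_inner_Amat_squared:
  assumes "a \<noteq> 0" "b \<noteq> 0" "confocal_param a b l" "p \<in> ellipse a b" "q \<noteq> p"
    and "tangent_line a b l p q"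
  shows "((1 / norm (q - p)) *\<^sub>R (q - p) \<bullet> Amat a b p)^2 = l / (a^2*b^2)"
  using tangent_line_inner_Amat_squared[OF assms(1-4,6)] assms(5)
  by (simp add: power_divide)

lemma linear_Amat: "linear (Amat a b)"
  by (rule linearI) (simp_all add: Amat_def vec_eq_iff add_divide_distrib)

lemma continuous_on_Amat [continuous_intros]:
  "continuous_on S f \<Longrightarrow> continuous_on S (\<lambda>t. Amat a b (f t))"
  using linear_Amat by (simp add: linear_conv_bounded_linear bounded_linear.continuous_on)

lemma continuous_square_constant_imp_constant:
  fixes f :: "'a::topological_space \<Rightarrow> real"
  assumes "connected S" "continuous_on S f" "\<And>x. x \<in> S \<Longrightarrow> (f x)^2 = c"
  shows "f constant_on S"
proof (rule continuous_finite_range_constant[OF assms(1,2)])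
  have "f ` S \<subseteq> {sqrt c, - sqrt c}"
    using assms(3) real_sqrt_abs by (fastforce simp: abs_if)
  then show "finite (f ` S)"
    by (rule finite_subset) simp
qed

lemma Jinv_eq_first_side:
  assumes "n \<ge> 1"
  shows "Jinv a b n p = - ((1 / norm (p (1 mod n) - p 0)) *\<^sub>R (p (1 mod n) - p 0) \<bullet> Amat a b (p 0))"
  using assms unfolding Jinv_def side_dir_def vtx_def by simp

lemma Jinv_squared:
  assumes "a \<noteq> 0" "b \<noteq> 0" "confocal_param a b l"
    and "periodic_billiard a b n p" "sides_tangent_to a b l n p"
  shows "(Jinv a b n p)^2 = l / (a^2*b^2)"
proof -
  have n: "n \<ge> 1" "0 < n" using assms(4) unfolding periodic_billiard_def by auto
  have "p 0 \<in> ellipse a b" "p (1 mod n) \<noteq> p 0"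
    using assms(4) n unfolding periodic_billiard_def vtx_def by auto
  moreover have "tangent_line a b l (p 0) (p (1 mod n))"
    using assms(5) n unfolding sides_tangent_to_def vtx_def by fastforce
  ultimately show ?thesis
    unfolding Jinv_eq_first_side[OF n(1)] using tangent_unit_inner_Amat_squared[OF assms(1-3)]
    by simp
qed

lemma continuous_on_Jinv:
  assumes "n \<ge> 1" "\<forall>i<n. continuous_on S (\<lambda>t. P t i)" "\<forall>t\<in>S. P t (1 mod n) \<noteq> P t 0"
  shows "continuous_on S (\<lambda>t. Jinv a b n (P t))"
  unfolding Jinv_eq_first_side[OF assms(1)]
  using assms by (intro continuous_intros) auto

theorem corollary2p2:
  fixes a1 a2 :: real and n :: nat and I :: "real set" and P :: "real \<Rightarrow> nat \<Rightarrow> real^2"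
  assumes "a1 > 0" and "a2 > 0"
    and "billiard_family a1 a2 n I P"
    and "s \<in> I" and "t \<in> I"
  shows "Jinv a1 a2 n (P s) = Jinv a1 a2 n (P t)"
proof -
  obtain lam where connected: "connected I"
    and continuous: "\<forall>i<n. continuous_on I (\<lambda>t. P t i)"
    and billiard: "\<forall>t\<in>I. periodic_billiard a1 a2 n (P t)"
    and lam: "confocal_param a1 a2 lam" "\<forall>t\<in>I. sides_tangent_to a1 a2 lam n (P t)"
    using assms(3) unfolding billiard_family_def by blast
  have n: "n \<ge> 1" using billiard assms(4) unfolding periodic_billiard_def by blast
  have "\<forall>t\<in>I. P t (1 mod n) \<noteq> P t 0"
    using billiard n unfolding periodic_billiard_def vtx_def by force
  with continuous_on_Jinv[OF n continuous]
  have "continuous_on I (\<lambda>t. Jinv a1 a2 n (P t))" by blast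
  moreover have "(Jinv a1 a2 n (P u))^2 = lam / (a1^2*a2^2)" if "u \<in> I" for u
    using Jinv_squared assms(1,2) lam billiard that by simp
  ultimately have "(\<lambda>t. Jinv a1 a2 n (P t)) constant_on I"
    by (rule continuous_square_constant_imp_constant[OF connected])
  then show ?thesis using assms(4,5) unfolding constant_on_def by metis
qed

end
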